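(* Let $T$ be a directed tree in which the longest directed path has length $1$ (i.e. every vertex is a source or a sink), and let $d$ be the degree of $T$. Then $T$ has span at most $\lfloor d/2\rfloor+1$.
   Context: A directed tree is a DAG (directed acyclic graph) whose underlying undirected graph is a tree. A source (sink) is a vertex with no incoming (outgoing) edge. The degree of a vertex is its total number of incident edges; the degree of a graph is the maximum degree of its vertices. The length of a directed path is its number of edges. An upward-planar layered drawing of a DAG $G$ maps each vertex $v$ to a point in the plane whose y-coordinate $y(v)$ is an integer, and each edge $(u,v)$ (directed from tail $u$ to head $v$) to a strictly y-monotone curve going upward from $u$ to $v$ (so $y(u)<y(v)$), such that no two edges intersect except at common endpoints. The span of an edge $(u,v)$ in such a drawing $\Gamma$ is $y(v)-y(u)$; the span of $\Gamma$ is the maximum span of its edges; the span of an upward-planar DAG is the minimum span over all its upward-planar layered drawings (no embedding prescribed). *)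

theory Defs
  imports "HOL-Analysis.Analysis"
begin

definition digraph :: "'a set \<Rightarrow> ('a \<times> 'a) set \<Rightarrow> bool" where
  "digraph V E \<longleftrightarrow> finite V \<and> E \<subseteq> V \<times> V"

definition uadj :: "('a \<times> 'a) set \<Rightarrow> 'a \<Rightarrow> 'a \<Rightarrow> bool" where
  "uadj E u v \<longleftrightarrow> (u, v) \<in> E \<or> (v, u) \<in> E"

definition ucycle :: "('a \<times> 'a) set \<Rightarrow> 'a list \<Rightarrow> bool" where
  "ucycle E cs \<longleftrightarrow> length cs \<ge> 3 \<and> distinct cs \<and>
     (\<forall>i. Suc i < length cs \<longrightarrow> uadj E (cs ! i) (cs ! Suc i)) \<and>
     uadj E (last cs) (hd cs)"

definition uconnected :: "'a set \<Rightarrow> ('a \<times> 'a) set \<Rightarrow> bool" where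
  "uconnected V E \<longleftrightarrow> (\<forall>u\<in>V. \<forall>v\<in>V. (u, v) \<in> (E \<union> E\<inverse>)\<^sup>*)"

text \<open>A directed tree: a digraph without loops and without antiparallel edges (these
  would be cycles / multi-edges of the underlying graph) whose underlying undirected
  graph is a tree (nonempty, connected, no cycle).  Such a digraph is automatically a DAG.\<close>
definition directed_tree :: "'a set \<Rightarrow> ('a \<times> 'a) set \<Rightarrow> bool" where
  "directed_tree V E \<longleftrightarrow> digraph V E \<and> V \<noteq> {} \<and>
     (\<forall>u v. (u, v) \<in> E \<longrightarrow> u \<noteq> v \<and> (v, u) \<notin> E) \<and>
     uconnected V E \<and> \<not> (\<exists>cs. ucycle E cs)"

definition is_source :: "('a \<times> 'a) set \<Rightarrow> 'a \<Rightarrow> bool" where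
  "is_source E v \<longleftrightarrow> (\<nexists>u. (u, v) \<in> E)"

definition is_sink :: "('a \<times> 'a) set \<Rightarrow> 'a \<Rightarrow> bool" where
  "is_sink E v \<longleftrightarrow> (\<nexists>w. (v, w) \<in> E)"

definition vdegree :: "('a \<times> 'a) set \<Rightarrow> 'a \<Rightarrow> nat" where
  "vdegree E v = card {e \<in> E. fst e = v \<or> snd e = v}"

definition graph_degree :: "'a set \<Rightarrow> ('a \<times> 'a) set \<Rightarrow> nat" where
  "graph_degree V E = Max (vdegree E ` V)"

definition upward_planar_layered_drawing ::
  "'a set \<Rightarrow> ('a \<times> 'a) set \<Rightarrow> ('a \<Rightarrow> real \<times> real) \<Rightarrow> ('a \<times> 'a \<Rightarrow> real \<Rightarrow> real \<times> real) \<Rightarrow> bool" where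
  "upward_planar_layered_drawing V E pos curve \<longleftrightarrow>
     inj_on pos V \<and>
     (\<forall>v\<in>V. snd (pos v) \<in> \<int>) \<and>
     (\<forall>(u, v)\<in>E. path (curve (u, v)) \<and>
        pathstart (curve (u, v)) = pos u \<and> pathfinish (curve (u, v)) = pos v \<and>
        strict_mono_on {0..1} (\<lambda>t. snd (curve (u, v) t))) \<and>
     (\<forall>e\<in>E. \<forall>w\<in>V. pos w \<in> path_image (curve e) \<longrightarrow> w = fst e \<or> w = snd e) \<and>
     (\<forall>e1\<in>E. \<forall>e2\<in>E. e1 \<noteq> e2 \<longrightarrow>
        path_image (curve e1) \<inter> path_image (curve e2) \<subseteq>
          pos ` ({fst e1, snd e1} \<inter> {fst e2, snd e2}))"

definition edge_span :: "('a \<Rightarrow> real \<times> real) \<Rightarrow> 'a \<times> 'a \<Rightarrow> real" where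
  "edge_span pos e = snd (pos (snd e)) - snd (pos (fst e))"

end

theory Submission
  imports Defs
begin

text \<open>The drawing is built recursively along a rooting of the tree, on integer levels. Every edge is
  a polyline: it leaves its tail diagonally, runs vertically along its own lane and enters its head
  diagonally. Such polylines form an upward planar drawing as soon as, on every level, distinct
  edges and vertices occupy distinct positions except at common endpoints, and no two edges exchange
  their left-to-right order between consecutive levels.

  Let s = \<lfloor>d/2\<rfloor> + 1. A source root lies below all other vertices of its subtree; each of its
  sink children is placed s levels higher, to the right of everything drawn so far, and is reached
  by an edge rising vertically in the child's column. The source children of a sink root r hang
  below r, the i-th child on either side i levels lower, and each new child is joined along a lane
  closer to the column of r than all earlier lanes on that side. Splitting the children of every
  sink evenly between its two sides keeps all spans at most s.\<close>

text \<open>The edge e is drawn through the points (level_x x y lane e k, k) for the integer levels k from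
  y (fst e) to y (snd e).\<close>

definition level_x :: "('a \<Rightarrow> real) \<Rightarrow> ('a \<Rightarrow> int) \<Rightarrow> ('a \<times> 'a \<Rightarrow> real) \<Rightarrow> 'a \<times> 'a \<Rightarrow> int \<Rightarrow> real"
  where "level_x x y lane e k =
    (if k = y (fst e) then x (fst e) else if k = y (snd e) then x (snd e) else lane e)"

locale lane_drawing =
  fixes V :: "'a set" and E :: "('a \<times> 'a) set"
    and x :: "'a \<Rightarrow> real" and y :: "'a \<Rightarrow> int" and lane :: "'a \<times> 'a \<Rightarrow> real"
  assumes edge: "e \<in> E \<Longrightarrow> fst e \<in> V \<and> snd e \<in> V \<and> y (fst e) < y (snd e)"
    and inj: "inj_on (\<lambda>w. (x w, y w)) V"
    and lane_vertex: "e \<in> E \<Longrightarrow> w \<in> V \<Longrightarrow> y (fst e) < y w \<Longrightarrow> y w < y (snd e) \<Longrightarrow> lane e \<noteq> x w"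
    and lane_lane: "e \<in> E \<Longrightarrow> e' \<in> E \<Longrightarrow> e \<noteq> e' \<Longrightarrow> y (fst e) < k \<Longrightarrow> k < y (snd e)
      \<Longrightarrow> y (fst e') < k \<Longrightarrow> k < y (snd e') \<Longrightarrow> lane e \<noteq> lane e'"
    and no_swap: "e \<in> E \<Longrightarrow> e' \<in> E \<Longrightarrow> e \<noteq> e' \<Longrightarrow> y (fst e) \<le> k \<Longrightarrow> k + 1 \<le> y (snd e)
      \<Longrightarrow> y (fst e') \<le> k \<Longrightarrow> k + 1 \<le> y (snd e')
      \<Longrightarrow> 0 \<le> (level_x x y lane e k - level_x x y lane e' k) *
              (level_x x y lane e (k + 1) - level_x x y lane e' (k + 1))"

lemma level_x_tail [simp]: "level_x x y lane e (y (fst e)) = x (fst e)"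
  by (simp add: level_x_def)

lemma level_x_head: "y (fst e) < y (snd e) \<Longrightarrow> level_x x y lane e (y (snd e)) = x (snd e)"
  by (simp add: level_x_def)

lemma level_x_interior: "k \<noteq> y (fst e) \<Longrightarrow> k \<noteq> y (snd e) \<Longrightarrow> level_x x y lane e k = lane e"
  by (simp add: level_x_def)

lemma level_x_fun_upd_other: "e \<noteq> e0 \<Longrightarrow> level_x x y (lane(e0 := l)) e k = level_x x y lane e k"
  by (simp add: level_x_def)

context lane_drawing
begin

lemma vertex_eqI: "u \<in> V \<Longrightarrow> w \<in> V \<Longrightarrow> x u = x w \<Longrightarrow> y u = y w \<Longrightarrow> u = w"
  using inj by (auto simp: inj_on_def)

lemma vertex_at_level_is_endpoint:
  assumes e: "e \<in> E" and w: "w \<in> V"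
    and range: "y (fst e) \<le> y w" "y w \<le> y (snd e)" and eq: "level_x x y lane e (y w) = x w"
  shows "w = fst e \<or> w = snd e"
proof -
  have ends: "fst e \<in> V" "snd e \<in> V" "y (fst e) < y (snd e)" using edge[OF e] by auto
  consider "y w = y (fst e)" | "y w = y (snd e)" | "y (fst e) < y w" "y w < y (snd e)"
    using range by linarith
  then show ?thesis
  proof cases
    case 1
    then have "x (fst e) = x w" using eq by (metis level_x_tail)
    then show ?thesis using vertex_eqI[OF ends(1) w] 1 by auto
  next
    case 2
    then have "x (snd e) = x w" using eq ends(3) by (metis level_x_head)
    then show ?thesis using vertex_eqI[OF ends(2) w] 2 by auto
  next
    case 3
    then have "lane e = x w" using eq by (simp add: level_x_interior)
    then show ?thesis using lane_vertex[OF e w 3] by simp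
  qed
qed

lemma common_endpoint_at_level:
  assumes e: "e \<in> E" and e': "e' \<in> E" and ne: "e \<noteq> e'"
    and k: "y (fst e) \<le> k" "k \<le> y (snd e)" "y (fst e') \<le> k" "k \<le> y (snd e')"
    and eq: "level_x x y lane e k = level_x x y lane e' k"
  shows "\<exists>w\<in>{fst e, snd e} \<inter> {fst e', snd e'}. y w = k \<and> x w = level_x x y lane e k"
proof -
  have common: "\<exists>w\<in>{fst f, snd f} \<inter> {fst f', snd f'}. y w = k \<and> x w = level_x x y lane f k"
    if f: "f \<in> E" "f' \<in> E" "y (fst f') \<le> k" "k \<le> y (snd f')"
      and eq: "level_x x y lane f k = level_x x y lane f' k"
      and w: "w \<in> {fst f, snd f}" "y w = k" for f f' w
  proof -
    have "y (fst f) < y (snd f)" "fst f \<in> V" "snd f \<in> V" using edge[OF f(1)] by auto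
    then have wV: "w \<in> V" and xw: "level_x x y lane f k = x w"
      using w by (auto simp: level_x_head)
    then have "w \<in> {fst f', snd f'}"
      using vertex_at_level_is_endpoint[OF f(2) wV] f(3,4) eq w(2) by auto
    then show ?thesis using w xw by auto
  qed
  consider "k = y (fst e) \<or> k = y (snd e)" | "k = y (fst e') \<or> k = y (snd e')"
    | "y (fst e) < k" "k < y (snd e)" "y (fst e') < k" "k < y (snd e')"
    using k by linarith
  then show ?thesis
  proof cases
    case 1
    then show ?thesis using common[OF e e' k(3,4) eq] by blast
  next
    case 2
    then obtain w where "w \<in> {fst e', snd e'} \<inter> {fst e, snd e}" "y w = k" "x w = level_x x y lane e' k"
      using common[OF e' e k(1,2) eq[symmetric]] by blast
    then show ?thesis using eq by auto
  next
    case 3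
    then show ?thesis using lane_lane[OF e e' ne 3] eq by (simp add: level_x_interior)
  qed
qed

lemma no_meet_at_consecutive_levels:
  assumes e: "e \<in> E" and e': "e' \<in> E" and ne: "e \<noteq> e'"
    and k: "y (fst e) \<le> k" "k + 1 \<le> y (snd e)" "y (fst e') \<le> k" "k + 1 \<le> y (snd e')"
    and eq0: "level_x x y lane e k = level_x x y lane e' k"
    and eq1: "level_x x y lane e (k + 1) = level_x x y lane e' (k + 1)"
  shows False
proof -
  obtain w0 where w0: "w0 \<in> {fst e, snd e} \<inter> {fst e', snd e'}" "y w0 = k"
    using common_endpoint_at_level[OF e e' ne _ _ _ _ eq0] k by auto
  obtain w1 where w1: "w1 \<in> {fst e, snd e} \<inter> {fst e', snd e'}" "y w1 = k + 1"
    using common_endpoint_at_level[OF e e' ne _ _ _ _ eq1] k by auto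
  have "y (fst e) < y (snd e)" "y (fst e') < y (snd e')" using edge[OF e] edge[OF e'] by auto
  then have "fst e = w0" "fst e' = w0" "snd e = w1" "snd e' = w1" using w0 w1 k by auto
  then show False using ne by (simp add: prod_eq_iff)
qed

end

definition clamp01 :: "real \<Rightarrow> real" where "clamp01 t = max 0 (min 1 t)"

definition edge_x :: "('a \<Rightarrow> real) \<Rightarrow> ('a \<Rightarrow> int) \<Rightarrow> ('a \<times> 'a \<Rightarrow> real) \<Rightarrow> 'a \<times> 'a \<Rightarrow> real \<Rightarrow> real"
  where "edge_x x y lane e h = x (fst e)
    + (lane e - x (fst e)) * clamp01 (h - of_int (y (fst e)))
    + (x (snd e) - lane e) * clamp01 (h - of_int (y (snd e)) + 1)"

definition edge_height :: "('a \<Rightarrow> int) \<Rightarrow> 'a \<times> 'a \<Rightarrow> real \<Rightarrow> real"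
  where "edge_height y e t = of_int (y (fst e)) + t * of_int (y (snd e) - y (fst e))"

definition edge_curve ::
  "('a \<Rightarrow> real) \<Rightarrow> ('a \<Rightarrow> int) \<Rightarrow> ('a \<times> 'a \<Rightarrow> real) \<Rightarrow> 'a \<times> 'a \<Rightarrow> real \<Rightarrow> real \<times> real"
  where "edge_curve x y lane e t = (edge_x x y lane e (edge_height y e t), edge_height y e t)"

definition vertex_point :: "('a \<Rightarrow> real) \<Rightarrow> ('a \<Rightarrow> int) \<Rightarrow> 'a \<Rightarrow> real \<times> real"
  where "vertex_point x y w = (x w, of_int (y w))"

lemma clamp01_affine:
  fixes m :: int and l :: real
  assumes "0 \<le> l" "l \<le> 1"
  shows "clamp01 (of_int m + l) = (1 - l) * clamp01 (of_int m) + l * clamp01 (of_int (m + 1))"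
proof -
  consider "m \<ge> 1" | "m \<le> -1" | "m = 0" by linarith
  then show ?thesis
  proof cases
    case 1
    then have "real_of_int m \<ge> 1" by simp
    then show ?thesis using assms by (simp add: clamp01_def)
  next
    case 2
    then have "real_of_int m \<le> -1" by simp
    then show ?thesis using assms by (simp add: clamp01_def)
  qed (use assms in \<open>simp add: clamp01_def\<close>)
qed

lemma edge_x_level:
  assumes "y (fst e) < y (snd e)" "y (fst e) \<le> k" "k \<le> y (snd e)"
  shows "edge_x x y lane e (of_int k) = level_x x y lane e k"
proof -
  consider "k = y (fst e)" | "k = y (snd e)" | "y (fst e) < k" "k < y (snd e)"
    using assms by linarith
  then show ?thesis
  proof cases
    case 1
    have "real_of_int (y (fst e)) - real_of_int (y (snd e)) + 1 \<le> 0" using assms by linarith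
    then show ?thesis using 1 by (simp add: edge_x_def clamp01_def)
  next
    case 2
    have "real_of_int (y (snd e)) - real_of_int (y (fst e)) \<ge> 1" using assms by linarith
    then show ?thesis using 2 assms by (simp add: edge_x_def level_x_head clamp01_def)
  next
    case 3
    have "real_of_int k - real_of_int (y (fst e)) \<ge> 1" "real_of_int k - real_of_int (y (snd e)) + 1 \<le> 0"
      using 3 by linarith+
    then show ?thesis using 3 by (simp add: edge_x_def level_x_interior clamp01_def)
  qed
qed

lemma edge_x_interpolate:
  assumes "0 \<le> l" "l \<le> 1"
  shows "edge_x x y lane e (of_int k + l) =
    (1 - l) * edge_x x y lane e (of_int k) + l * edge_x x y lane e (of_int (k + 1))"
proof -
  have fst_part: "clamp01 (of_int k + l - of_int (y (fst e))) =
      (1 - l) * clamp01 (of_int (k - y (fst e))) + l * clamp01 (of_int (k - y (fst e) + 1))"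
    using clamp01_affine[OF assms, of "k - y (fst e)"] by (simp add: algebra_simps)
  have snd_part: "clamp01 (of_int k + l - of_int (y (snd e)) + 1) =
      (1 - l) * clamp01 (of_int (k - y (snd e) + 1)) + l * clamp01 (of_int (k - y (snd e) + 1 + 1))"
    using clamp01_affine[OF assms, of "k - y (snd e) + 1"] by (simp add: algebra_simps)
  show ?thesis unfolding edge_x_def fst_part snd_part by (simp add: algebra_simps)
qed

lemma continuous_on_edge_x: "continuous_on S (edge_x x y lane e)"
  unfolding edge_x_def clamp01_def by (intro continuous_intros)

lemma edge_height_bounds:
  assumes "y (fst e) < y (snd e)" "t \<in> {0..1}"
  shows "of_int (y (fst e)) \<le> edge_height y e t" "edge_height y e t \<le> of_int (y (snd e))"
proof -
  have "0 \<le> t * of_int (y (snd e) - y (fst e))" using assms by simp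
  moreover have "t * of_int (y (snd e) - y (fst e)) \<le> of_int (y (snd e) - y (fst e))"
    using assms by (intro mult_left_le_one_le) auto
  ultimately show "of_int (y (fst e)) \<le> edge_height y e t" "edge_height y e t \<le> of_int (y (snd e))"
    unfolding edge_height_def by auto
qed

lemma convex_combination_eq_0_same_sign:
  fixes l d0 d1 :: real
  assumes "0 < l" "l < 1" "0 \<le> d0 * d1" "(1 - l) * d0 + l * d1 = 0"
  shows "d0 = 0 \<and> d1 = 0"
proof -
  have "(0 \<le> d0 \<and> 0 \<le> d1) \<or> (d0 \<le> 0 \<and> d1 \<le> 0)" using assms(3) by (auto simp: zero_le_mult_iff)
  then have "(0 \<le> (1 - l) * d0 \<and> 0 \<le> l * d1) \<or> ((1 - l) * d0 \<le> 0 \<and> l * d1 \<le> 0)"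
    using assms(1,2) by (auto intro: mult_nonneg_nonneg mult_nonneg_nonpos)
  then have "(1 - l) * d0 = 0 \<and> l * d1 = 0" using assms(4) by linarith
  then show ?thesis using assms(1,2) by simp
qed

context lane_drawing
begin

lemma vertex_on_edge_curve_is_endpoint:
  assumes e: "e \<in> E" and w: "w \<in> V" and t: "t \<in> {0..1}"
    and eq: "edge_curve x y lane e t = vertex_point x y w"
  shows "w = fst e \<or> w = snd e"
proof -
  have up: "y (fst e) < y (snd e)" using edge[OF e] by simp
  have pair: "(edge_x x y lane e (edge_height y e t), edge_height y e t) = (x w, of_int (y w))"
    using eq unfolding edge_curve_def vertex_point_def .
  then have h: "edge_height y e t = of_int (y w)" by simp
  with pair have xw: "edge_x x y lane e (of_int (y w)) = x w" by simp
  have range: "y (fst e) \<le> y w" "y w \<le> y (snd e)" using edge_height_bounds[OF up t] h by simp_all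
  then have "level_x x y lane e (y w) = x w" using edge_x_level[OF up range] xw by simp
  then show ?thesis using vertex_at_level_is_endpoint[OF e w range] by simp
qed

lemma edge_curves_meet_at_common_endpoint:
  assumes e1: "e1 \<in> E" and e2: "e2 \<in> E" and ne: "e1 \<noteq> e2" and t: "t1 \<in> {0..1}" "t2 \<in> {0..1}"
    and eq: "edge_curve x y lane e1 t1 = edge_curve x y lane e2 t2"
  shows "edge_curve x y lane e1 t1 \<in> vertex_point x y ` ({fst e1, snd e1} \<inter> {fst e2, snd e2})"
proof -
  define h where "h = edge_height y e1 t1"
  have pair: "(edge_x x y lane e1 h, h) = (edge_x x y lane e2 (edge_height y e2 t2), edge_height y e2 t2)"
    using eq unfolding edge_curve_def h_def .
  then have h2: "edge_height y e2 t2 = h" by simp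
  with pair have xeq: "edge_x x y lane e1 h = edge_x x y lane e2 h" by simp
  have up: "y (fst e1) < y (snd e1)" "y (fst e2) < y (snd e2)" using edge[OF e1] edge[OF e2] by simp_all
  have range: "of_int (y (fst e1)) \<le> h" "h \<le> of_int (y (snd e1))"
    "of_int (y (fst e2)) \<le> h" "h \<le> of_int (y (snd e2))"
    using edge_height_bounds[OF up(1) t(1)] edge_height_bounds[OF up(2) t(2)] h2 by (simp_all add: h_def)
  define k where "k = \<lfloor>h\<rfloor>"
  define l where "l = h - of_int k"
  have l: "0 \<le> l" "l < 1" and hk: "h = of_int k + l" unfolding l_def k_def by linarith+
  have k: "y (fst e1) \<le> k" "y (fst e2) \<le> k" using range unfolding k_def by (simp_all add: le_floor_iff)
  show ?thesis
  proof (cases "l = 0")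
    case True
    then have "k \<le> y (snd e1)" "k \<le> y (snd e2)" using range hk by simp_all
    then obtain w where w: "w \<in> {fst e1, snd e1} \<inter> {fst e2, snd e2}" "y w = k"
        "x w = level_x x y lane e1 k"
      using common_endpoint_at_level[OF e1 e2 ne k(1) _ k(2)] xeq edge_x_level[OF up(1) k(1)] edge_x_level[OF up(2) k(2)]
        hk True by auto
    then have "edge_curve x y lane e1 t1 = vertex_point x y w"
      using edge_x_level[OF up(1) k(1)] \<open>k \<le> y (snd e1)\<close> hk True
      by (simp add: edge_curve_def vertex_point_def h_def[symmetric])
    then show ?thesis using w by blast
  next
    case False
    txt \<open>Strictly between two levels both curves are the same convex combination of their
      level points, so by the no-swap condition they meet on both levels.\<close>
    then have k1: "k + 1 \<le> y (snd e1)" "k + 1 \<le> y (snd e2)" using range hk l by linarith+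
    have at_levels: "edge_x x y lane e h =
        (1 - l) * level_x x y lane e k + l * level_x x y lane e (k + 1)"
      if "y (fst e) < y (snd e)" "y (fst e) \<le> k" "k + 1 \<le> y (snd e)" for e
      using edge_x_interpolate[of l x y lane e k] edge_x_level[of y e k x lane]
        edge_x_level[of y e "k + 1" x lane] that l hk by simp
    define d0 where "d0 = level_x x y lane e1 k - level_x x y lane e2 k"
    define d1 where "d1 = level_x x y lane e1 (k + 1) - level_x x y lane e2 (k + 1)"
    have "0 \<le> d0 * d1" unfolding d0_def d1_def using no_swap[OF e1 e2 ne k(1) k1(1) k(2) k1(2)] .
    moreover have "(1 - l) * d0 + l * d1 = 0"
      using xeq at_levels[OF up(1) k(1) k1(1)] at_levels[OF up(2) k(2) k1(2)]
      unfolding d0_def d1_def by (simp add: algebra_simps)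
    ultimately have "d0 = 0 \<and> d1 = 0" using l False by (intro convex_combination_eq_0_same_sign) auto
    then show ?thesis using no_meet_at_consecutive_levels[OF e1 e2 ne k(1) k1(1) k(2) k1(2)] by (simp add: d0_def d1_def)
  qed
qed

lemma upward_planar_layered:
  "upward_planar_layered_drawing V E (vertex_point x y) (edge_curve x y lane)"
  unfolding upward_planar_layered_drawing_def
proof (intro conjI ballI impI subsetI)
  show "inj_on (vertex_point x y) V"
    using vertex_eqI by (auto simp: inj_on_def vertex_point_def)
  show "snd (vertex_point x y v) \<in> \<int>" for v by (simp add: vertex_point_def)
next
  fix e assume e: "e \<in> E"
  obtain u v where uv: "e = (u, v)" by fastforce
  have up: "y u < y v" using edge[OF e] uv by simp
  have "continuous_on {0..1} (edge_height y e)" unfolding edge_height_def by (intro continuous_intros)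
  then have "path (edge_curve x y lane e)"
    unfolding path_def edge_curve_def
    by (intro continuous_on_Pair continuous_on_compose2[OF continuous_on_edge_x]) auto
  moreover have "pathstart (edge_curve x y lane e) = vertex_point x y u"
    "pathfinish (edge_curve x y lane e) = vertex_point x y v"
    using edge_x_level[of y e "y u" x lane] edge_x_level[of y e "y v" x lane] up uv
    by (simp_all add: pathstart_def pathfinish_def edge_curve_def edge_height_def vertex_point_def level_x_def)
  moreover have "strict_mono_on {0..1} (\<lambda>t. snd (edge_curve x y lane e t))"
    using up uv by (auto simp: strict_mono_on_def edge_curve_def edge_height_def intro!: mult_strict_right_mono)
  ultimately show "case e of (u, v) \<Rightarrow> path (edge_curve x y lane (u, v)) \<and>
      pathstart (edge_curve x y lane (u, v)) = vertex_point x y u \<and>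
      pathfinish (edge_curve x y lane (u, v)) = vertex_point x y v \<and>
      strict_mono_on {0..1} (\<lambda>t. snd (edge_curve x y lane (u, v) t))"
    using uv by simp
next
  fix e w assume "e \<in> E" "w \<in> V" "vertex_point x y w \<in> path_image (edge_curve x y lane e)"
  then show "w = fst e \<or> w = snd e"
    using vertex_on_edge_curve_is_endpoint unfolding path_image_def by (metis imageE)
next
  fix e1 e2 z assume e: "e1 \<in> E" "e2 \<in> E" "e1 \<noteq> e2"
    and "z \<in> path_image (edge_curve x y lane e1) \<inter> path_image (edge_curve x y lane e2)"
  then obtain t1 t2 where t: "t1 \<in> {0..1}" "t2 \<in> {0..1}"
    and z: "z = edge_curve x y lane e1 t1" "z = edge_curve x y lane e2 t2"
    unfolding path_image_def by blast
  then show "z \<in> vertex_point x y ` ({fst e1, snd e1} \<inter> {fst e2, snd e2})"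
    using edge_curves_meet_at_common_endpoint[OF e t] by simp
qed

end

lemma level_x_cong:
  assumes "\<forall>w\<in>{fst e, snd e}. x' w = x w \<and> y' w = y w" "lane' e = lane e"
  shows "level_x x' y' lane' e k = level_x x y lane e k"
  using assms by (simp add: level_x_def)

lemma level_x_affine:
  "level_x (\<lambda>w. a * x w + t) y (\<lambda>e. a * lane e + t) e k = a * level_x x y lane e k + t"
  by (simp add: level_x_def)

lemma same_order_diff_mult_nonneg:
  fixes a b c d :: real
  shows "(a \<le> b \<and> c \<le> d) \<or> (b \<le> a \<and> d \<le> c) \<Longrightarrow> 0 \<le> (a - b) * (c - d)"
  by (auto intro: mult_nonpos_nonpos mult_nonneg_nonneg)

lemma lane_drawing_cong:
  assumes "lane_drawing V E x y lane"
    and "\<forall>w\<in>V. x' w = x w \<and> y' w = y w" "\<forall>e\<in>E. lane' e = lane e"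
  shows "lane_drawing V E x' y' lane'"
proof -
  interpret lane_drawing V E x y lane by fact
  have level: "level_x x' y' lane' e k = level_x x y lane e k" if "e \<in> E" for e k
    using edge[OF that] assms(2,3) that by (intro level_x_cong) auto
  have ends: "x' w = x w" "y' w = y w" if "e \<in> E" "w \<in> {fst e, snd e}" for e w
    using edge[OF that(1)] that(2) assms(2) by auto
  show ?thesis
  proof
    show "inj_on (\<lambda>w. (x' w, y' w)) V" using inj assms(2) by (auto simp: inj_on_def)
  next
    fix e assume "e \<in> E"
    then show "fst e \<in> V \<and> snd e \<in> V \<and> y' (fst e) < y' (snd e)" using edge ends by auto
  next
    fix e w assume "e \<in> E" "w \<in> V" "y' (fst e) < y' w" "y' w < y' (snd e)"
    then show "lane' e \<noteq> x' w" using lane_vertex ends assms(2,3) by auto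
  next
    fix e e' k assume "e \<in> E" "e' \<in> E" "e \<noteq> e'" "y' (fst e) < k" "k < y' (snd e)"
      "y' (fst e') < k" "k < y' (snd e')"
    then show "lane' e \<noteq> lane' e'" using lane_lane ends assms(3) by auto
  next
    fix e e' k assume "e \<in> E" "e' \<in> E" "e \<noteq> e'" "y' (fst e) \<le> k" "k + 1 \<le> y' (snd e)"
      "y' (fst e') \<le> k" "k + 1 \<le> y' (snd e')"
    then show "0 \<le> (level_x x' y' lane' e k - level_x x' y' lane' e' k) *
        (level_x x' y' lane' e (k + 1) - level_x x' y' lane' e' (k + 1))"
      using no_swap ends level by simp
  qed
qed

lemma lane_drawing_affine:
  assumes "lane_drawing V E x y lane" "a \<noteq> 0"
  shows "lane_drawing V E (\<lambda>w. a * x w + t) y (\<lambda>e. a * lane e + t)"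
proof -
  interpret lane_drawing V E x y lane by fact
  show ?thesis
  proof
    show "inj_on (\<lambda>w. (a * x w + t, y w)) V" using inj assms(2) by (auto simp: inj_on_def)
  next
    fix e assume "e \<in> E"
    then show "fst e \<in> V \<and> snd e \<in> V \<and> y (fst e) < y (snd e)" by (rule edge)
  next
    fix e w assume "e \<in> E" "w \<in> V" "y (fst e) < y w" "y w < y (snd e)"
    then show "a * lane e + t \<noteq> a * x w + t" using lane_vertex assms(2) by simp
  next
    fix e e' k assume "e \<in> E" "e' \<in> E" "e \<noteq> e'" "y (fst e) < k" "k < y (snd e)"
      "y (fst e') < k" "k < y (snd e')"
    then show "a * lane e + t \<noteq> a * lane e' + t" using lane_lane assms(2) by simp
  next
    fix e e' k assume "e \<in> E" "e' \<in> E" "e \<noteq> e'" "y (fst e) \<le> k" "k + 1 \<le> y (snd e)"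
      "y (fst e') \<le> k" "k + 1 \<le> y (snd e')"
    from no_swap[OF this] have "0 \<le> (a * a) * ((level_x x y lane e k - level_x x y lane e' k) *
        (level_x x y lane e (k + 1) - level_x x y lane e' (k + 1)))"
      by simp
    then show "0 \<le> (level_x (\<lambda>w. a * x w + t) y (\<lambda>e. a * lane e + t) e k -
        level_x (\<lambda>w. a * x w + t) y (\<lambda>e. a * lane e + t) e' k) *
      (level_x (\<lambda>w. a * x w + t) y (\<lambda>e. a * lane e + t) e (k + 1) -
        level_x (\<lambda>w. a * x w + t) y (\<lambda>e. a * lane e + t) e' (k + 1))"
      unfolding level_x_affine by (simp add: algebra_simps)
  qed
qed

lemma lane_drawing_mirror:
  "lane_drawing V E x y lane \<Longrightarrow> lane_drawing V E (\<lambda>w. - x w) y (\<lambda>e. - lane e)"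
  using lane_drawing_affine[of V E x y lane "-1" 0] by simp

lemma lane_drawing_union:
  assumes D1: "lane_drawing V1 E1 x y lane" and D2: "lane_drawing V2 E2 x y lane"
    and left: "\<forall>w\<in>V1. x w < m" "\<forall>e\<in>E1. lane e < m"
    and right: "\<forall>w\<in>V2. m < x w" "\<forall>e\<in>E2. m < lane e"
  shows "lane_drawing (V1 \<union> V2) (E1 \<union> E2) x y lane"
proof -
  interpret D1: lane_drawing V1 E1 x y lane by fact
  interpret D2: lane_drawing V2 E2 x y lane by fact
  have level1: "level_x x y lane e k < m" if "e \<in> E1" for e k
    using D1.edge[OF that] left that by (auto simp: level_x_def)
  have level2: "m < level_x x y lane e k" if "e \<in> E2" for e k
    using D2.edge[OF that] right that by (auto simp: level_x_def)
  show ?thesis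
  proof
    have "(\<lambda>w. (x w, y w)) ` V1 \<inter> (\<lambda>w. (x w, y w)) ` V2 = {}"
      using left(1) right(1) by fastforce
    then show "inj_on (\<lambda>w. (x w, y w)) (V1 \<union> V2)"
      using D1.inj D2.inj by (auto simp: inj_on_Un)
  next
    fix e assume "e \<in> E1 \<union> E2"
    then show "fst e \<in> V1 \<union> V2 \<and> snd e \<in> V1 \<union> V2 \<and> y (fst e) < y (snd e)"
      using D1.edge D2.edge by blast
  next
    fix e w assume ew: "e \<in> E1 \<union> E2" "w \<in> V1 \<union> V2" and "y (fst e) < y w" "y w < y (snd e)"
    then consider "e \<in> E1" "w \<in> V1" | "e \<in> E2" "w \<in> V2" | "lane e < m" "m < x w" | "x w < m" "m < lane e"
      using left right by blast
    then show "lane e \<noteq> x w"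
      by cases (use D1.lane_vertex D2.lane_vertex \<open>y (fst e) < y w\<close> \<open>y w < y (snd e)\<close> in auto)
  next
    fix e e' k assume "e \<in> E1 \<union> E2" "e' \<in> E1 \<union> E2" "e \<noteq> e'"
      and k: "y (fst e) < k" "k < y (snd e)" "y (fst e') < k" "k < y (snd e')"
    then consider "e \<in> E1" "e' \<in> E1" | "e \<in> E2" "e' \<in> E2" | "lane e < m" "m < lane e'"
      | "lane e' < m" "m < lane e"
      using left(2) right(2) by blast
    then show "lane e \<noteq> lane e'"
      by cases (use D1.lane_lane D2.lane_lane \<open>e \<noteq> e'\<close> k in auto)
  next
    fix e e' k assume "e \<in> E1 \<union> E2" "e' \<in> E1 \<union> E2" "e \<noteq> e'"
      and k: "y (fst e) \<le> k" "k + 1 \<le> y (snd e)" "y (fst e') \<le> k" "k + 1 \<le> y (snd e')"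
    then consider "e \<in> E1" "e' \<in> E1" | "e \<in> E2" "e' \<in> E2" | "e \<in> E1" "e' \<in> E2" | "e \<in> E2" "e' \<in> E1"
      by blast
    then show "0 \<le> (level_x x y lane e k - level_x x y lane e' k) *
        (level_x x y lane e (k + 1) - level_x x y lane e' (k + 1))"
    proof cases
      case 1
      then show ?thesis using D1.no_swap \<open>e \<noteq> e'\<close> k by blast
    next
      case 2
      then show ?thesis using D2.no_swap \<open>e \<noteq> e'\<close> k by blast
    next
      case 3
      then show ?thesis using level1 level2 by (intro same_order_diff_mult_nonneg) (meson less_imp_le order.strict_trans)
    next
      case 4
      then show ?thesis using level1 level2 by (intro same_order_diff_mult_nonneg) (meson less_imp_le order.strict_trans)
    qed
  qed
qed

lemma lane_drawing_insert_edge: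
  assumes D: "lane_drawing V E x y lane" and e0: "e0 \<notin> E" "fst e0 \<in> V" "snd e0 \<in> V"
    and up: "y (fst e0) < y (snd e0)"
    and lane_vertex0: "\<And>w. w \<in> V \<Longrightarrow> y (fst e0) < y w \<Longrightarrow> y w < y (snd e0) \<Longrightarrow> l \<noteq> x w"
    and lane_lane0: "\<And>e k. e \<in> E \<Longrightarrow> y (fst e0) < k \<Longrightarrow> k < y (snd e0)
      \<Longrightarrow> y (fst e) < k \<Longrightarrow> k < y (snd e) \<Longrightarrow> l \<noteq> lane e"
    and no_swap0: "\<And>e k. e \<in> E \<Longrightarrow> y (fst e0) \<le> k \<Longrightarrow> k + 1 \<le> y (snd e0)
      \<Longrightarrow> y (fst e) \<le> k \<Longrightarrow> k + 1 \<le> y (snd e)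
      \<Longrightarrow> 0 \<le> (level_x x y (lane(e0 := l)) e0 k - level_x x y lane e k) *
              (level_x x y (lane(e0 := l)) e0 (k + 1) - level_x x y lane e (k + 1))"
  shows "lane_drawing V (insert e0 E) x y (lane(e0 := l))"
proof -
  interpret lane_drawing V E x y lane by fact
  have other: "e \<noteq> e0" if "e \<in> E" for e using that e0(1) by blast
  show ?thesis
  proof
    show "inj_on (\<lambda>w. (x w, y w)) V" by (rule inj)
  next
    fix e assume "e \<in> insert e0 E"
    then show "fst e \<in> V \<and> snd e \<in> V \<and> y (fst e) < y (snd e)" using edge e0 up by blast
  next
    fix e w assume "e \<in> insert e0 E" "w \<in> V" "y (fst e) < y w" "y w < y (snd e)"
    then show "(lane(e0 := l)) e \<noteq> x w" using lane_vertex lane_vertex0 other by fastforce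
  next
    fix e e' k assume e: "e \<in> insert e0 E" "e' \<in> insert e0 E" "e \<noteq> e'"
      and k: "y (fst e) < k" "k < y (snd e)" "y (fst e') < k" "k < y (snd e')"
    consider "e = e0" "e' \<in> E" | "e \<in> E" "e' = e0" | "e \<in> E" "e' \<in> E" using e by blast
    then show "(lane(e0 := l)) e \<noteq> (lane(e0 := l)) e'"
    proof cases
      case 1
      then show ?thesis using lane_lane0[of e' k] k other by auto
    next
      case 2
      then show ?thesis using lane_lane0[of e k] k other by auto
    next
      case 3
      then show ?thesis using lane_lane[OF 3 e(3) k] other by simp
    qed
  next
    fix e e' k assume e: "e \<in> insert e0 E" "e' \<in> insert e0 E" "e \<noteq> e'"
      and k: "y (fst e) \<le> k" "k + 1 \<le> y (snd e)" "y (fst e') \<le> k" "k + 1 \<le> y (snd e')"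
    consider "e = e0" "e' \<in> E" | "e \<in> E" "e' = e0" | "e \<in> E" "e' \<in> E" using e by blast
    then show "0 \<le> (level_x x y (lane(e0 := l)) e k - level_x x y (lane(e0 := l)) e' k) *
        (level_x x y (lane(e0 := l)) e (k + 1) - level_x x y (lane(e0 := l)) e' (k + 1))"
    proof cases
      case 1
      then show ?thesis using no_swap0[of e' k] k other by (simp add: level_x_fun_upd_other)
    next
      case 2
      have swap: "(b - a) * (d - c) = (a - b) * (c - d)" for a b c d :: real
        by (simp add: algebra_simps)
      show ?thesis using 2 no_swap0[of e k] k other by (subst swap) (simp add: level_x_fun_upd_other)
    next
      case 3
      then show ?thesis using no_swap[OF 3 e(3) k] other by (simp add: level_x_fun_upd_other)
    qed
  qed
qed

lemma lane_drawing_beside: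
  assumes D1: "lane_drawing V1 E1 x1 y1 l1" and D2: "lane_drawing V2 E2 x2 y2 l2"
    and dj: "V1 \<inter> V2 = {}" and fin: "finite V1" "finite E1" "finite V2" "finite E2"
  obtains x y lane t M where "lane_drawing (V1 \<union> V2) (E1 \<union> E2) x y lane"
    "\<forall>w\<in>V1. x w = x1 w \<and> y w = y1 w" "\<forall>w\<in>V2. x w = x2 w + t \<and> y w = y2 w"
    "\<forall>e\<in>E1. lane e = l1 e" "\<forall>e\<in>E2. lane e = l2 e + t"
    "\<forall>w\<in>V1. x w \<le> M" "\<forall>e\<in>E1. lane e \<le> M" "\<forall>w\<in>V2. M + 1 \<le> x w" "\<forall>e\<in>E2. M + 1 \<le> lane e"
proof -
  obtain M where left: "\<forall>w\<in>V1. x1 w \<le> M" "\<forall>e\<in>E1. l1 e \<le> M"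
    using bdd_above_finite[of "x1 ` V1 \<union> l1 ` E1"] fin(1,2) by (auto simp: bdd_above_def)
  obtain b where b: "\<forall>v\<in>x2 ` V2 \<union> l2 ` E2. b \<le> v"
    using bdd_below_finite[of "x2 ` V2 \<union> l2 ` E2"] fin(3,4) by (auto simp: bdd_below_def)
  define t where "t = M + 1 - b"
  define x where "x = (\<lambda>w. if w \<in> V1 then x1 w else x2 w + t)"
  define y where "y = (\<lambda>w. if w \<in> V1 then y1 w else y2 w)"
  define lane where "lane = (\<lambda>e. if e \<in> E1 then l1 e else l2 e + t)"
  have E2_not_E1: "e \<notin> E1" if "e \<in> E2" for e
    using that dj lane_drawing.edge[OF D1] lane_drawing.edge[OF D2] by blast
  have agree: "\<forall>w\<in>V1. x w = x1 w \<and> y w = y1 w" "\<forall>w\<in>V2. x w = x2 w + t \<and> y w = y2 w"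
    "\<forall>e\<in>E1. lane e = l1 e" "\<forall>e\<in>E2. lane e = l2 e + t"
    using dj E2_not_E1 by (auto simp: x_def y_def lane_def)
  have bounds: "\<forall>w\<in>V1. x w \<le> M" "\<forall>e\<in>E1. lane e \<le> M" "\<forall>w\<in>V2. M + 1 \<le> x w" "\<forall>e\<in>E2. M + 1 \<le> lane e"
    using left b agree by (auto simp: t_def)
  have "lane_drawing V1 E1 x y lane" using D1 agree by (rule_tac lane_drawing_cong) auto
  moreover have "lane_drawing V2 E2 (\<lambda>w. x2 w + t) y2 (\<lambda>e. l2 e + t)"
    using lane_drawing_affine[OF D2 one_neq_zero, of t] by simp
  then have "lane_drawing V2 E2 x y lane" using agree by (rule_tac lane_drawing_cong) auto
  ultimately have "lane_drawing (V1 \<union> V2) (E1 \<union> E2) x y lane"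
    by (rule lane_drawing_union[where m = "M + 1 / 2"]) (use bounds in auto)
  then show thesis using that agree bounds by blast
qed

text \<open>The invariant of a subtree hanging from a sink r that has a children on its right and b on
  its left. Edges entering r from the right keep a distance at least 1/(a + 1) from the column of r,
  so a further right child can be joined along the lane x r + 1/(a + 2), nested inside all of them
  (and symmetrically on the left).\<close>

definition sink_frame :: "'a set \<Rightarrow> ('a \<times> 'a) set \<Rightarrow> 'a \<Rightarrow> ('a \<Rightarrow> real) \<Rightarrow> ('a \<Rightarrow> int)
    \<Rightarrow> ('a \<times> 'a \<Rightarrow> real) \<Rightarrow> nat \<Rightarrow> nat \<Rightarrow> bool"
  where "sink_frame V E r x y lane a b \<longleftrightarrow>
    (\<forall>w\<in>V. w \<noteq> r \<longrightarrow> x r + 1 \<le> x w \<and> y r - int a \<le> y w \<or> x w \<le> x r - 1 \<and> y r - int b \<le> y w) \<and>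
    (\<forall>e\<in>E. (\<forall>k. (snd e, k) \<noteq> (r, y r) \<longrightarrow> x r + 1 / (real a + 1) \<le> level_x x y lane e k) \<or>
           (\<forall>k. (snd e, k) \<noteq> (r, y r) \<longrightarrow> level_x x y lane e k \<le> x r - 1 / (real b + 1)))"

lemma sink_frame_single: "sink_frame {r} {} r x y lane 0 0"
  by (simp add: sink_frame_def)

lemma sink_frame_mono:
  assumes "sink_frame V E r x y lane a b" "a \<le> a'" "b \<le> b'"
  shows "sink_frame V E r x y lane a' b'"
proof -
  have "1 / (real a' + 1) \<le> 1 / (real a + 1)" "1 / (real b' + 1) \<le> 1 / (real b + 1)"
    using assms(2,3) by (simp_all add: frac_le)
  then show ?thesis using assms unfolding sink_frame_def by (smt (verit) of_nat_mono)
qed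

lemma sink_frame_cong:
  assumes "sink_frame V E r x y lane a b" "r \<in> V" "\<forall>e\<in>E. fst e \<in> V \<and> snd e \<in> V"
    and "\<forall>w\<in>V. x' w = x w \<and> y' w = y w" "\<forall>e\<in>E. lane' e = lane e"
  shows "sink_frame V E r x' y' lane' a b"
proof -
  have "level_x x' y' lane' e k = level_x x y lane e k" if "e \<in> E" for e k
    using assms(3-5) that by (intro level_x_cong) auto
  then show ?thesis using assms(1,2,4) unfolding sink_frame_def by simp
qed

lemma sink_frame_shift:
  "sink_frame V E r x y lane a b \<Longrightarrow> sink_frame V E r (\<lambda>w. x w + t) y (\<lambda>e. lane e + t) a b"
  using level_x_affine[of 1 x t y lane] by (simp add: sink_frame_def)

lemma sink_frame_mirror:
  "sink_frame V E r x y lane a b \<Longrightarrow> sink_frame V E r (\<lambda>w. - x w) y (\<lambda>e. - lane e) b a"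
  using level_x_affine[of "-1" x 0 y lane] unfolding sink_frame_def by (simp; smt (verit))

lemma sink_frame_lowest_level:
  "sink_frame V E r x y lane a b \<Longrightarrow> w \<in> V \<Longrightarrow> y r - int (max a b) \<le> y w"
  unfolding sink_frame_def by force

lemma sink_frame_column:
  assumes "sink_frame V E r x y lane a b"
  shows "\<forall>w\<in>V. w \<noteq> r \<longrightarrow> x w \<noteq> x r"
    and "\<forall>e\<in>E. (\<forall>k. (snd e, k) \<noteq> (r, y r) \<longrightarrow> x r < level_x x y lane e k) \<or>
                (\<forall>k. (snd e, k) \<noteq> (r, y r) \<longrightarrow> level_x x y lane e k < x r)"
proof -
  have "0 < 1 / (real a + 1)" "0 < 1 / (real b + 1)" by simp_all
  then show "\<forall>w\<in>V. w \<noteq> r \<longrightarrow> x w \<noteq> x r"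
    "\<forall>e\<in>E. (\<forall>k. (snd e, k) \<noteq> (r, y r) \<longrightarrow> x r < level_x x y lane e k) \<or>
                (\<forall>k. (snd e, k) \<noteq> (r, y r) \<longrightarrow> level_x x y lane e k < x r)"
    using assms unfolding sink_frame_def by (fastforce, smt (verit))
qed

lemma sink_frame_edge_sides:
  assumes F: "sink_frame V E r x y lane a b" and e: "e \<in> E" "y (fst e) < y (snd e)"
  shows "(\<forall>k. (snd e, k) \<noteq> (r, y r) \<longrightarrow> x r + 1 / (real a + 1) \<le> level_x x y lane e k) \<or>
    (\<forall>k. level_x x y lane e k \<le> x r)"
proof -
  have "(\<forall>k. level_x x y lane e k \<le> x r)"
    if left: "\<forall>k. (snd e, k) \<noteq> (r, y r) \<longrightarrow> level_x x y lane e k \<le> x r - 1 / (real b + 1)"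
  proof
    fix k show "level_x x y lane e k \<le> x r"
    proof (cases "(snd e, k) = (r, y r)")
      case True
      then show ?thesis using e(2) by (auto simp: level_x_head)
    next
      case False
      then have "level_x x y lane e k \<le> x r - 1 / (real b + 1)" using left by blast
      moreover have "0 < 1 / (real b + 1)" by simp
      ultimately show ?thesis by linarith
    qed
  qed
  then show ?thesis using F e(1) unfolding sink_frame_def by blast
qed

lemma sink_frame_no_swap_nested:
  assumes F: "sink_frame V E r x y lane a b" and e: "e \<in> E" "fst e \<in> V" "y (fst e) < y (snd e)"
    and k: "y (fst e) \<le> k" "k + 1 \<le> y (snd e)" "k + 1 \<le> y r"
    and g: "\<forall>j. x r \<le> g j" "g (y r) = x r" "\<forall>j. y r - int a \<le> j \<and> j < y r \<longrightarrow> g j < x r + 1 / (real a + 1)"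
  shows "0 \<le> (g k - level_x x y lane e k) * (g (k + 1) - level_x x y lane e (k + 1))"
  using sink_frame_edge_sides[OF F e(1,3)]
proof
  assume right: "\<forall>j. (snd e, j) \<noteq> (r, y r) \<longrightarrow> x r + 1 / (real a + 1) \<le> level_x x y lane e j"
  have "(snd e, y (fst e)) \<noteq> (r, y r)" using e(3) by auto
  then have "x r + 1 / (real a + 1) \<le> x (fst e)" using right level_x_tail by metis
  moreover have "0 < 1 / (real a + 1)" by simp
  ultimately have "x r < x (fst e)" by linarith
  then have "y r - int a \<le> y (fst e)" using F e(2) unfolding sink_frame_def by force
  have below: "g j \<le> level_x x y lane e j" if "y r - int a \<le> j" "j \<le> y r" for j
  proof (cases "(snd e, j) = (r, y r)")
    case True
    then show ?thesis using e(3) g(2) by (auto simp: level_x_head)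
  next
    case False
    then have "x r + 1 / (real a + 1) \<le> level_x x y lane e j" using right by blast
    moreover have "g j \<le> x r + 1 / (real a + 1)"
      using g(2,3) that \<open>0 < 1 / (real a + 1)\<close> by (cases "j = y r") (auto intro: less_imp_le)
    ultimately show ?thesis by linarith
  qed
  show ?thesis using below[of k] below[of "k + 1"] k \<open>y r - int a \<le> y (fst e)\<close>
    by (intro same_order_diff_mult_nonneg) simp
next
  assume "\<forall>j. level_x x y lane e j \<le> x r"
  then show ?thesis using g(1) by (intro same_order_diff_mult_nonneg) (meson order_trans)
qed

lemma lane_drawing_insert_column_edge:
  assumes D: "lane_drawing V E x y lane" and new: "(r, c) \<notin> E"
    and r: "r \<in> V" and c: "c \<in> V" "c \<noteq> r"
    and lowest: "\<forall>w\<in>V. w \<noteq> r \<longrightarrow> y r < y w"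
    and column_free: "\<forall>w\<in>V. w \<noteq> c \<longrightarrow> x w \<noteq> x c"
    and sides: "\<forall>e\<in>E. (\<forall>k. (snd e, k) \<noteq> (c, y c) \<longrightarrow> x c < level_x x y lane e k) \<or>
                       (\<forall>k. (snd e, k) \<noteq> (c, y c) \<longrightarrow> level_x x y lane e k < x c)"
  shows "lane_drawing V (insert (r, c) E) x y (lane((r, c) := x c))"
proof -
  interpret lane_drawing V E x y lane by fact
  have up: "y r < y c" using lowest c by blast
  have level0: "level_x x y (lane((r, c) := x c)) (r, c) j = (if j = y r then x r else x c)" for j
    by (simp add: level_x_def)
  show ?thesis
  proof (rule lane_drawing_insert_edge[OF D new _ _ _])
    fix w assume "w \<in> V" "y (fst (r, c)) < y w" "y w < y (snd (r, c))"
    then show "x c \<noteq> x w" using column_free by auto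
  next
    fix e k assume e: "e \<in> E" and k: "y (fst (r, c)) < k" "k < y (snd (r, c))" "y (fst e) < k" "k < y (snd e)"
    then have "level_x x y lane e k = lane e" by (simp add: level_x_interior)
    moreover have "(snd e, k) \<noteq> (c, y c)" using k by simp
    moreover have "x c < level_x x y lane e k \<or> level_x x y lane e k < x c"
      using sides e \<open>(snd e, k) \<noteq> (c, y c)\<close> by blast
    ultimately show "x c \<noteq> lane e" by linarith
  next
    fix e k assume e: "e \<in> E" and k: "y (fst (r, c)) \<le> k" "k + 1 \<le> y (snd (r, c))"
      "y (fst e) \<le> k" "k + 1 \<le> y (snd e)"
    show "0 \<le> (level_x x y (lane((r, c) := x c)) (r, c) k - level_x x y lane e k) *
        (level_x x y (lane((r, c) := x c)) (r, c) (k + 1) - level_x x y lane e (k + 1))"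
    proof (cases "k = y r")
      case True
      then have "fst e = r" using lowest edge[OF e] k by force
      then have "level_x x y lane e k = x r" using True by (metis level_x_tail)
      then show ?thesis using True by (simp add: level0)
    next
      case False
      have at_c: "level_x x y lane e j = x c" if "(snd e, j) = (c, y c)" for j
        using edge[OF e] that by (auto simp: level_x_head)
      have "(\<forall>j. x c \<le> level_x x y lane e j) \<or> (\<forall>j. level_x x y lane e j \<le> x c)"
        using sides e at_c by (metis order.order_iff_strict)
      moreover have "k \<noteq> y r" "k + 1 \<noteq> y r" using False k by simp_all
      ultimately show ?thesis unfolding level0 by (auto intro!: same_order_diff_mult_nonneg)
    qed
  qed (use r c up in auto)
qed

lemma lane_drawing_insert_nested_edge:
  assumes D: "lane_drawing (V1 \<union> V2) (E1 \<union> E2) x y lane" and F: "sink_frame V1 E1 r x y lane a b"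
    and parts: "V1 \<inter> V2 = {}" "E1 \<subseteq> V1 \<times> V1" "E2 \<subseteq> V2 \<times> V2" and r: "r \<in> V1" and c: "c \<in> V2"
    and yc: "y c = y r - int a - 1" and lowest2: "\<forall>w\<in>V2. w \<noteq> c \<longrightarrow> y c < y w"
    and right2: "\<forall>w\<in>V2. x r + 1 \<le> x w" "\<forall>e\<in>E2. \<forall>k. x r + 1 \<le> level_x x y lane e k"
  shows "lane_drawing (V1 \<union> V2) (insert (c, r) (E1 \<union> E2)) x y (lane((c, r) := x r + 1 / (real a + 2)))"
proof -
  interpret lane_drawing "V1 \<union> V2" "E1 \<union> E2" x y lane by fact
  define l0 where "l0 = x r + 1 / (real a + 2)"
  have l0: "x r < l0" "l0 < x r + 1 / (real a + 1)"
    unfolding l0_def by (simp_all add: frac_less2)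
  moreover have "1 / (real a + 1) \<le> 1" by simp
  ultimately have l0_less: "l0 < x r + 1" by linarith
  have xc: "x r + 1 \<le> x c" using right2 c by blast
  have level0: "level_x x y (lane((c, r) := l0)) (c, r) j = (if j = y c then x c else if j = y r then x r else l0)"
    for j using yc by (simp add: level_x_def)
  have new: "(c, r) \<notin> E1 \<union> E2" using parts r c by blast
  show ?thesis unfolding l0_def[symmetric]
  proof (rule lane_drawing_insert_edge[OF D new])
    fix w assume w: "w \<in> V1 \<union> V2" and "y (fst (c, r)) < y w" "y w < y (snd (c, r))"
    then have "w \<noteq> r" by auto
    then have "x r + 1 \<le> x w \<or> x w \<le> x r - 1" using w F right2 unfolding sink_frame_def by blast
    then show "l0 \<noteq> x w" using l0 l0_less by linarith
  next
    fix e k assume e: "e \<in> E1 \<union> E2"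
      and k: "y (fst (c, r)) < k" "k < y (snd (c, r))" "y (fst e) < k" "k < y (snd e)"
    then have "(snd e, k) \<noteq> (r, y r)" "level_x x y lane e k = lane e" by (simp_all add: level_x_interior)
    then have "x r + 1 \<le> lane e \<or> x r + 1 / (real a + 1) \<le> lane e \<or> lane e \<le> x r"
      using e right2 sink_frame_edge_sides[OF F] edge by (metis UnE UnI1)
    then show "l0 \<noteq> lane e" using l0 l0_less by linarith
  next
    fix e k assume e: "e \<in> E1 \<union> E2" and k: "y (fst (c, r)) \<le> k" "k + 1 \<le> y (snd (c, r))"
      "y (fst e) \<le> k" "k + 1 \<le> y (snd e)"
    show "0 \<le> (level_x x y (lane((c, r) := l0)) (c, r) k - level_x x y lane e k) *
        (level_x x y (lane((c, r) := l0)) (c, r) (k + 1) - level_x x y lane e (k + 1))"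
    proof (cases "e \<in> E1")
      case True
      show ?thesis unfolding level0
        by (rule sink_frame_no_swap_nested[OF F True,
              where g = "\<lambda>j. if j = y c then x c else if j = y r then x r else l0"])
          (use parts(2) True edge[OF e] k l0 xc yc in auto)
    next
      case False
      then have "e \<in> E2" using e by blast
      show ?thesis
      proof (cases "k = y c")
        case True
        then have "fst e = c" using lowest2 parts(3) \<open>e \<in> E2\<close> k by force
        then have "level_x x y lane e k = x c" using True by (metis level_x_tail)
        then show ?thesis using True by (simp add: level0)
      next
        case False
        have "x r + 1 \<le> level_x x y lane e k" "x r + 1 \<le> level_x x y lane e (k + 1)"
          using \<open>e \<in> E2\<close> right2 by blast+
        then show ?thesis using False k l0 l0_less unfolding level0
          by (intro same_order_diff_mult_nonneg disjI1) auto
      qed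
    qed
  qed (use r c yc parts in auto)
qed

lemma sink_frame_insert_nested_edge:
  assumes F: "sink_frame V1 E1 r x y lane a b"
    and parts: "V1 \<inter> V2 = {}" "E1 \<subseteq> V1 \<times> V1" "E2 \<subseteq> V2 \<times> V2" and r: "r \<in> V1" and c: "c \<in> V2"
    and yc: "y c = y r - int a - 1" and lowest2: "\<forall>w\<in>V2. w \<noteq> c \<longrightarrow> y c < y w"
    and right2: "\<forall>w\<in>V2. x r + 1 \<le> x w" "\<forall>e\<in>E2. \<forall>k. x r + 1 \<le> level_x x y lane e k"
  shows "sink_frame (V1 \<union> V2) (insert (c, r) (E1 \<union> E2)) r x y (lane((c, r) := x r + 1 / (real a + 2)))
    (Suc a) b"
proof -
  define lane' where "lane' = lane((c, r) := x r + 1 / (real a + 2))"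
  have other: "e \<noteq> (c, r)" if "e \<in> E1 \<union> E2" for e using that parts r c by blast
  have "sink_frame V1 E1 r x y lane' (Suc a) b"
    using sink_frame_mono[OF F, of "Suc a" b] r parts(2) other
    by (rule_tac sink_frame_cong) (auto simp: lane'_def)
  then have FV: "\<forall>w\<in>V1. w \<noteq> r \<longrightarrow> x r + 1 \<le> x w \<and> y r - int (Suc a) \<le> y w \<or> x w \<le> x r - 1 \<and> y r - int b \<le> y w"
    and FE: "\<forall>e\<in>E1. (\<forall>k. (snd e, k) \<noteq> (r, y r) \<longrightarrow> x r + 1 / (real (Suc a) + 1) \<le> level_x x y lane' e k) \<or>
           (\<forall>k. (snd e, k) \<noteq> (r, y r) \<longrightarrow> level_x x y lane' e k \<le> x r - 1 / (real b + 1))"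
    unfolding sink_frame_def by blast+
  have small: "1 / (real (Suc a) + 1) \<le> 1" by simp
  show ?thesis unfolding lane'_def[symmetric] sink_frame_def
  proof (intro conjI ballI impI)
    fix w assume "w \<in> V1 \<union> V2" "w \<noteq> r"
    moreover have "y c \<le> y w" if "w \<in> V2" using lowest2 that by (cases "w = c") auto
    ultimately show "x r + 1 \<le> x w \<and> y r - int (Suc a) \<le> y w \<or> x w \<le> x r - 1 \<and> y r - int b \<le> y w"
      using FV right2 yc by fastforce
  next
    fix e assume "e \<in> insert (c, r) (E1 \<union> E2)"
    then consider "e = (c, r)" | "e \<in> E1" | "e \<in> E2" by blast
    then show "(\<forall>k. (snd e, k) \<noteq> (r, y r) \<longrightarrow> x r + 1 / (real (Suc a) + 1) \<le> level_x x y lane' e k) \<or>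
           (\<forall>k. (snd e, k) \<noteq> (r, y r) \<longrightarrow> level_x x y lane' e k \<le> x r - 1 / (real b + 1))"
    proof cases
      case 1
      have "x r + 1 \<le> x c" "1 / (real a + 2) \<le> 1" using right2 c by simp_all
      then have "x r + 1 / (real a + 2) \<le> x c" by linarith
      then have "x r + 1 / (real (Suc a) + 1) \<le> level_x x y lane' (c, r) k" if "k \<noteq> y r" for k
        using that by (auto simp: lane'_def level_x_def add.commute)
      then show ?thesis using 1 by simp
    next
      case 2
      then show ?thesis using FE by blast
    next
      case 3
      then have "level_x x y lane' e k = level_x x y lane e k" for k
        using other by (simp add: lane'_def level_x_fun_upd_other)
      then show ?thesis using 3 right2 small by (smt (verit))
    qed
  qed
qed

lemma sink_frame_attach_source_child:
  assumes D1: "lane_drawing V1 E1 x1 y1 l1" and F1: "sink_frame V1 E1 r x1 y1 l1 a b"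
    and D2: "lane_drawing V2 E2 x2 y2 l2" and lowest2: "\<forall>w\<in>V2. w \<noteq> c \<longrightarrow> y2 c < y2 w"
    and yc: "y2 c = y1 r - int a - 1"
    and r: "r \<in> V1" and c: "c \<in> V2" and dj: "V1 \<inter> V2 = {}"
    and fin: "finite V1" "finite E1" "finite V2" "finite E2"
  shows "\<exists>x y lane. lane_drawing (V1 \<union> V2) (insert (c, r) (E1 \<union> E2)) x y lane \<and>
    sink_frame (V1 \<union> V2) (insert (c, r) (E1 \<union> E2)) r x y lane (Suc a) b \<and>
    (\<forall>w\<in>V1. y w = y1 w) \<and> (\<forall>w\<in>V2. y w = y2 w)"
proof -
  obtain x y lane t M where D: "lane_drawing (V1 \<union> V2) (E1 \<union> E2) x y lane"
    and agree: "\<forall>w\<in>V1. x w = x1 w \<and> y w = y1 w" "\<forall>w\<in>V2. x w = x2 w + t \<and> y w = y2 w"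
      "\<forall>e\<in>E1. lane e = l1 e"
    and M: "\<forall>w\<in>V1. x w \<le> M" "\<forall>w\<in>V2. M + 1 \<le> x w" "\<forall>e\<in>E2. M + 1 \<le> lane e"
    by (rule lane_drawing_beside[OF D1 D2 dj fin]) blast
  have E1V: "E1 \<subseteq> V1 \<times> V1" and E2V: "E2 \<subseteq> V2 \<times> V2"
    using lane_drawing.edge[OF D1] lane_drawing.edge[OF D2] by fastforce+
  have F: "sink_frame V1 E1 r x y lane a b" using F1 r E1V agree by (rule_tac sink_frame_cong) auto
  have right_V2: "\<forall>w\<in>V2. x r + 1 \<le> x w" using M r by fastforce
  moreover have "\<forall>e\<in>E2. \<forall>k. x r + 1 \<le> level_x x y lane e k"
  proof (intro ballI allI)
    fix e k assume "e \<in> E2"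
    moreover have "x r \<le> M" using M r by blast
    ultimately have "fst e \<in> V2" "snd e \<in> V2" "x r + 1 \<le> lane e" using E2V M by force+
    then show "x r + 1 \<le> level_x x y lane e k" using right_V2 by (simp add: level_x_def)
  qed
  moreover have "y c = y r - int a - 1" "\<forall>w\<in>V2. w \<noteq> c \<longrightarrow> y c < y w"
    using yc lowest2 agree r c by simp_all
  ultimately have step: "lane_drawing (V1 \<union> V2) (E1 \<union> E2) x y lane" "sink_frame V1 E1 r x y lane a b"
    "V1 \<inter> V2 = {}" "E1 \<subseteq> V1 \<times> V1" "E2 \<subseteq> V2 \<times> V2" "r \<in> V1" "c \<in> V2"
    "y c = y r - int a - 1" "\<forall>w\<in>V2. w \<noteq> c \<longrightarrow> y c < y w"
    "\<forall>w\<in>V2. x r + 1 \<le> x w" "\<forall>e\<in>E2. \<forall>k. x r + 1 \<le> level_x x y lane e k"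
    using D F dj E1V E2V r c by blast+
  show ?thesis
    using lane_drawing_insert_nested_edge[OF step] sink_frame_insert_nested_edge[OF step(2-)] agree by blast
qed

lemma lane_drawing_attach_sink_child:
  assumes D1: "lane_drawing V1 E1 x1 y1 l1" and lowest1: "\<forall>w\<in>V1. w \<noteq> r \<longrightarrow> y1 r < y1 w"
    and D2: "lane_drawing V2 E2 x2 y2 l2" and F2: "sink_frame V2 E2 c x2 y2 l2 a b"
    and above: "y1 r < y2 c - int (max a b)"
    and r: "r \<in> V1" and c: "c \<in> V2" and dj: "V1 \<inter> V2 = {}"
    and fin: "finite V1" "finite E1" "finite V2" "finite E2"
  shows "\<exists>x y lane. lane_drawing (V1 \<union> V2) (insert (r, c) (E1 \<union> E2)) x y lane \<and>
    (\<forall>w\<in>V1 \<union> V2. w \<noteq> r \<longrightarrow> y r < y w) \<and> (\<forall>w\<in>V1. y w = y1 w) \<and> (\<forall>w\<in>V2. y w = y2 w)"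
proof -
  obtain x y lane t M where D: "lane_drawing (V1 \<union> V2) (E1 \<union> E2) x y lane"
    and agree: "\<forall>w\<in>V1. x w = x1 w \<and> y w = y1 w" "\<forall>w\<in>V2. x w = x2 w + t \<and> y w = y2 w"
      "\<forall>e\<in>E2. lane e = l2 e + t"
    and M: "\<forall>w\<in>V1. x w \<le> M" "\<forall>e\<in>E1. lane e \<le> M" "\<forall>w\<in>V2. M + 1 \<le> x w"
    by (rule lane_drawing_beside[OF D1 D2 dj fin]) blast
  have E1V: "E1 \<subseteq> V1 \<times> V1" and E2V: "E2 \<subseteq> V2 \<times> V2"
    using lane_drawing.edge[OF D1] lane_drawing.edge[OF D2] by fastforce+
  have F: "sink_frame V2 E2 c x y lane a b"
    using sink_frame_shift[OF F2, of t] c E2V agree by (rule_tac sink_frame_cong) auto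
  have left1: "\<forall>w\<in>V1. x w < x c" using M c by fastforce
  have "\<forall>e\<in>E1. \<forall>k. level_x x y lane e k < x c"
  proof (intro ballI allI)
    fix e k assume "e \<in> E1"
    then have "fst e \<in> V1" "snd e \<in> V1" "lane e < x c" using E1V M c by fastforce+
    then show "level_x x y lane e k < x c" using left1 by (simp add: level_x_def)
  qed
  then have sides: "\<forall>e\<in>E1 \<union> E2. (\<forall>k. (snd e, k) \<noteq> (c, y c) \<longrightarrow> x c < level_x x y lane e k) \<or>
      (\<forall>k. (snd e, k) \<noteq> (c, y c) \<longrightarrow> level_x x y lane e k < x c)"
    using sink_frame_column(2)[OF F] by blast
  have column_free: "\<forall>w\<in>V1 \<union> V2. w \<noteq> c \<longrightarrow> x w \<noteq> x c"
    using left1 sink_frame_column(1)[OF F] by fastforce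
  have lowest: "\<forall>w\<in>V1 \<union> V2. w \<noteq> r \<longrightarrow> y r < y w"
  proof (intro ballI impI)
    fix w assume "w \<in> V1 \<union> V2" "w \<noteq> r"
    then consider "w \<in> V1" | "w \<in> V2" by blast
    then show "y r < y w"
    proof cases
      case 1
      then show ?thesis using lowest1 agree r \<open>w \<noteq> r\<close> by auto
    next
      case 2
      then have "y c - int (max a b) \<le> y w" by (rule sink_frame_lowest_level[OF F])
      then show ?thesis using above agree r c by auto
    qed
  qed
  have "(r, c) \<notin> E1 \<union> E2" "r \<in> V1 \<union> V2" "c \<in> V1 \<union> V2" "c \<noteq> r" using E1V E2V dj r c by auto
  from lane_drawing_insert_column_edge[OF D this lowest column_free sides]
  show ?thesis using lowest agree by blast
qed

inductive rooted_tree :: "'a set \<Rightarrow> ('a \<times> 'a) set \<Rightarrow> 'a \<Rightarrow> bool" where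
  single: "rooted_tree {r} {} r"
| attach: "rooted_tree V1 E1 r \<Longrightarrow> rooted_tree V2 E2 c \<Longrightarrow> V1 \<inter> V2 = {} \<Longrightarrow> e \<in> {(r, c), (c, r)}
    \<Longrightarrow> rooted_tree (V1 \<union> V2) (insert e (E1 \<union> E2)) r"

lemma rooted_tree_props: "rooted_tree V E r \<Longrightarrow> finite V \<and> finite E \<and> r \<in> V \<and> E \<subseteq> V \<times> V"
  by (induction rule: rooted_tree.induct) auto

lemma rooted_tree_add_leaf:
  assumes "rooted_tree V E r" "n \<in> V" "l \<notin> V" "e \<in> {(n, l), (l, n)}"
  shows "rooted_tree (insert l V) (insert e E) r"
  using assms
proof (induction arbitrary: n rule: rooted_tree.induct)
  case (single r)
  have "rooted_tree ({r} \<union> {l}) (insert e ({} \<union> {})) r"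
    by (rule rooted_tree.attach[OF rooted_tree.single rooted_tree.single]) (use single in auto)
  then show ?case by (simp add: insert_commute)
next
  case (attach V1 E1 r V2 E2 c e')
  show ?case
  proof (cases "n \<in> V1")
    case True
    then have "rooted_tree (insert l V1 \<union> V2) (insert e' (insert e E1 \<union> E2)) r"
      using attach by (intro rooted_tree.attach) auto
    then show ?thesis by (simp add: insert_commute)
  next
    case False
    then have "rooted_tree (V1 \<union> insert l V2) (insert e' (E1 \<union> insert e E2)) r"
      using attach by (intro rooted_tree.attach) auto
    then show ?thesis by (simp add: insert_commute)
  qed
qed

definition upath :: "('a \<times> 'a) set \<Rightarrow> 'a list \<Rightarrow> bool"
  where "upath E p \<longleftrightarrow> (\<forall>i. Suc i < length p \<longrightarrow> uadj E (p ! i) (p ! Suc i))"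

lemma upath_snoc:
  assumes "upath E p" "p \<noteq> []" "uadj E (last p) w"
  shows "upath E (p @ [w])"
  unfolding upath_def
proof (intro allI impI)
  fix i assume i: "Suc i < length (p @ [w])"
  show "uadj E ((p @ [w]) ! i) ((p @ [w]) ! Suc i)"
  proof (cases "Suc i < length p")
    case True
    then show ?thesis using assms(1) by (simp add: upath_def nth_append)
  next
    case False
    then have "i = length p - 1" "Suc i = length p" using i by simp_all
    then show ?thesis using assms(2,3) by (simp add: nth_append last_conv_nth)
  qed
qed

lemma ucycle_drop:
  assumes "upath E p" "distinct p" "i + 3 \<le> length p" "uadj E (last p) (p ! i)"
  shows "ucycle E (drop i p)"
  unfolding ucycle_def
proof (intro conjI allI impI)
  show "3 \<le> length (drop i p)" "distinct (drop i p)" using assms(2,3) by simp_all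
  show "uadj E (drop i p ! j) (drop i p ! Suc j)" if "Suc j < length (drop i p)" for j
    using assms(1) that unfolding upath_def by simp
  show "uadj E (last (drop i p)) (hd (drop i p))" using assms(3,4) by (simp add: hd_drop_conv_nth)
qed

lemma directed_tree_uadj:
  assumes "directed_tree V E" "uadj E u v"
  shows "u \<in> V" "v \<in> V" "u \<noteq> v"
  using assms unfolding directed_tree_def digraph_def uadj_def by auto

lemma directed_tree_maximal_upath:
  assumes T: "directed_tree V E" and r: "r \<in> V"
  obtains p where "p \<noteq> []" "hd p = r" "distinct p" "set p \<subseteq> V" "upath E p"
    "\<And>w. uadj E (last p) w \<Longrightarrow> w \<in> set p"
proof -
  define P where "P p \<longleftrightarrow> p \<noteq> [] \<and> hd p = r \<and> distinct p \<and> set p \<subseteq> V \<and> upath E p" for p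
  have "P [r]" using r by (simp add: P_def upath_def)
  moreover have "length p < card V + 1" if "P p" for p
    using that card_mono[of V "set p"] T distinct_card[of p]
    unfolding P_def directed_tree_def digraph_def by auto
  ultimately obtain p where p: "P p" and longest: "\<And>q. P q \<Longrightarrow> length q \<le> length p"
    using ex_has_greatest_nat[of P "[r]" length "card V + 1"] by metis
  have "w \<in> set p" if "uadj E (last p) w" for w
  proof (rule ccontr)
    assume "w \<notin> set p"
    then have "P (p @ [w])"
      using p that directed_tree_uadj[OF T that] upath_snoc by (auto simp: P_def)
    then show False using longest by fastforce
  qed
  then show thesis using that p unfolding P_def by blast
qed

lemma directed_tree_has_leaf:
  assumes T: "directed_tree V E" and r: "r \<in> V" and nontrivial: "V \<noteq> {r}"
  shows "\<exists>l n. l \<in> V \<and> l \<noteq> r \<and> uadj E l n \<and> (\<forall>w. uadj E l w \<longrightarrow> w = n)"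
proof -
  obtain p where p: "p \<noteq> []" "hd p = r" "distinct p" "set p \<subseteq> V" "upath E p"
    and maximal: "\<And>w. uadj E (last p) w \<Longrightarrow> w \<in> set p"
    using directed_tree_maximal_upath[OF T r] by blast
  have "length p \<noteq> 1"
  proof
    assume "length p = 1"
    then have pr: "p = [r]" using p by (cases p) auto
    obtain w where "w \<in> V" "w \<noteq> r" using nontrivial r by auto
    then have "(r, w) \<in> (E \<union> E\<inverse>)\<^sup>*" using T r unfolding directed_tree_def uconnected_def by blast
    then obtain z where "(r, z) \<in> E \<union> E\<inverse>" using \<open>w \<noteq> r\<close> by (cases rule: converse_rtranclE) auto
    then have rz: "uadj E r z" by (auto simp: uadj_def)
    moreover have "z \<noteq> r" using directed_tree_uadj(3)[OF T rz] by blast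
    ultimately show False using maximal[of z] pr by simp
  qed
  moreover have "length p \<noteq> 0" using p by simp
  ultimately have len: "2 \<le> length p" by linarith
  define l where "l = last p"
  define n where "n = p ! (length p - 2)"
  have l_nth: "l = p ! (length p - 1)" unfolding l_def using len by (intro last_conv_nth) auto
  have "Suc (length p - 2) < length p" "Suc (length p - 2) = length p - 1" using len by auto
  then have "uadj E n l" using p(5) unfolding upath_def n_def l_nth by metis
  then have "uadj E l n" by (auto simp: uadj_def)
  moreover have "l \<in> V" using p len unfolding l_def by auto
  moreover have "l \<noteq> r"
  proof
    assume "l = r"
    moreover have "hd p = p ! 0" using len by (intro hd_conv_nth) auto
    ultimately have "p ! (length p - 1) = p ! 0" using p unfolding l_nth by simp
    then show False using p len by (simp add: nth_eq_iff_index_eq)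
  qed
  moreover have "w = n" if lw: "uadj E l w" for w
  proof -
    obtain i where i: "i < length p" "p ! i = w" using maximal lw unfolding l_def by (meson in_set_conv_nth)
    have "i \<noteq> length p - 1" using directed_tree_uadj(3)[OF T lw] i l_nth by auto
    moreover have "\<not> i + 3 \<le> length p"
    proof
      assume "i + 3 \<le> length p"
      then have "ucycle E (drop i p)" using ucycle_drop[of E p i] p lw i unfolding l_def by simp
      then show False using T unfolding directed_tree_def by blast
    qed
    ultimately have "i = length p - 2" using i(1) by linarith
    then show ?thesis using i(2) by (simp add: n_def)
  qed
  ultimately show ?thesis by blast
qed

lemma ucycle_mono: "E' \<subseteq> E \<Longrightarrow> ucycle E' cs \<Longrightarrow> ucycle E cs"
  unfolding ucycle_def uadj_def by blast

lemma rtrancl_bypass_leaf: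
  assumes leaf: "\<forall>w. uadj E l w \<longrightarrow> w = n" and path: "(u, w) \<in> (E \<union> E\<inverse>)\<^sup>*" and u: "u \<noteq> l"
  defines "E' \<equiv> {e \<in> E. fst e \<noteq> l \<and> snd e \<noteq> l}"
  shows "(u, if w = l then n else w) \<in> (E' \<union> E'\<inverse>)\<^sup>*"
  using path
proof (induction rule: rtrancl_induct)
  case base
  then show ?case using u by simp
next
  case (step w z)
  show ?case
  proof (cases "w = l \<or> z = l")
    case True
    have "uadj E w z" "uadj E z w" using step.hyps(2) by (auto simp: uadj_def)
    then have "(if w = l then n else w) = (if z = l then n else z)" using True leaf by auto
    then show ?thesis using step.IH by simp
  next
    case False
    then have "(w, z) \<in> E' \<union> E'\<inverse>" using step.hyps(2) by (auto simp: E'_def)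
    then show ?thesis using step.IH False by (simp add: rtrancl.rtrancl_into_rtrancl)
  qed
qed

lemma directed_tree_remove_leaf:
  assumes T: "directed_tree V E" and l: "l \<in> V" "uadj E l n" "\<forall>w. uadj E l w \<longrightarrow> w = n"
  defines "E' \<equiv> {e \<in> E. fst e \<noteq> l \<and> snd e \<noteq> l}"
  shows "directed_tree (V - {l}) E'" "n \<in> V - {l}" "\<exists>e0\<in>{(n, l), (l, n)}. E = insert e0 E'"
proof -
  have F: "finite V" "E \<subseteq> V \<times> V" "\<forall>u v. (u, v) \<in> E \<longrightarrow> u \<noteq> v \<and> (v, u) \<notin> E"
    "uconnected V E" "\<not> (\<exists>cs. ucycle E cs)"
    using T unfolding directed_tree_def digraph_def by auto
  show n: "n \<in> V - {l}" using directed_tree_uadj[OF T l(2)] by auto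
  have "uconnected (V - {l}) E'"
    unfolding uconnected_def
  proof (intro ballI)
    fix u w assume "u \<in> V - {l}" "w \<in> V - {l}"
    then show "(u, w) \<in> (E' \<union> E'\<inverse>)\<^sup>*"
      using rtrancl_bypass_leaf[OF l(3), of u w] F(4) unfolding uconnected_def E'_def by simp
  qed
  moreover have "\<not> (\<exists>cs. ucycle E' cs)" using F(5) ucycle_mono[of E' E] by (auto simp: E'_def)
  moreover have "E' \<subseteq> (V - {l}) \<times> (V - {l})" using F(2) by (auto simp: E'_def)
  ultimately show "directed_tree (V - {l}) E'"
    using F(1,3) n unfolding directed_tree_def digraph_def E'_def by blast
  obtain e0 where e0: "e0 \<in> E" "e0 \<in> {(n, l), (l, n)}" using l(2) by (auto simp: uadj_def)
  have leaf_edge: "e = e0" if "e \<in> E" "fst e = l \<or> snd e = l" for e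
  proof -
    have "uadj E l (if fst e = l then snd e else fst e)" using that by (cases e) (auto simp: uadj_def)
    then have "e \<in> {(n, l), (l, n)}" using that l(3) by (cases e) (auto split: if_splits)
    then consider "e = e0" | "e = (n, l)" "e0 = (l, n)" | "e = (l, n)" "e0 = (n, l)" using e0(2) by blast
    then show ?thesis by cases (use F(3) that(1) e0(1) in auto)
  qed
  have "E = insert e0 E'"
  proof
    show "insert e0 E' \<subseteq> E" using e0 by (auto simp: E'_def)
    show "E \<subseteq> insert e0 E'" using leaf_edge by (auto simp: E'_def)
  qed
  then show "\<exists>e0\<in>{(n, l), (l, n)}. E = insert e0 E'" using e0 by blast
qed

lemma directed_tree_rooted_tree:
  assumes "directed_tree V E" "r \<in> V"
  shows "rooted_tree V E r"
  using assms
proof (induction "card V" arbitrary: V E rule: less_induct)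
  case less
  note T = less.prems(1)
  show ?case
  proof (cases "V = {r}")
    case True
    then have "E = {}" using T unfolding directed_tree_def digraph_def by auto
    then show ?thesis using True rooted_tree.single by simp
  next
    case False
    obtain l n where l: "l \<in> V" "l \<noteq> r" "uadj E l n" "\<forall>w. uadj E l w \<longrightarrow> w = n"
      using directed_tree_has_leaf[OF T less.prems(2) False] by blast
    note smaller = directed_tree_remove_leaf[OF T l(1,3,4)]
    have "card (V - {l}) < card V" using l(1) T unfolding directed_tree_def digraph_def
      by (meson card_Diff1_less)
    then have rest: "rooted_tree (V - {l}) {e \<in> E. fst e \<noteq> l \<and> snd e \<noteq> l} r"
      using less.hyps smaller(1) less.prems(2) l(2) by blast
    obtain e0 where e0: "e0 \<in> {(n, l), (l, n)}" and E: "E = insert e0 {e \<in> E. fst e \<noteq> l \<and> snd e \<noteq> l}"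
      using smaller(3) by blast
    have "rooted_tree (insert l (V - {l})) (insert e0 {e \<in> E. fst e \<noteq> l \<and> snd e \<noteq> l}) r"
      using rooted_tree_add_leaf[OF rest smaller(2) _ e0] by blast
    then show ?thesis unfolding insert_Diff[OF l(1)] E[symmetric] .
  qed
qed

lemma vdegree_insert_Un:
  assumes "finite E1" "e \<notin> E1" "fst e = v \<or> snd e = v" "\<forall>f\<in>E2. fst f \<noteq> v \<and> snd f \<noteq> v"
  shows "vdegree (insert e (E1 \<union> E2)) v = Suc (vdegree E1 v)"
proof -
  have "{f \<in> insert e (E1 \<union> E2). fst f = v \<or> snd f = v} = insert e {f \<in> E1. fst f = v \<or> snd f = v}"
    using assms(3,4) by auto
  then show ?thesis unfolding vdegree_def using assms(1,2) by simp
qed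

lemma vdegree_mono: "finite E \<Longrightarrow> E' \<subseteq> E \<Longrightarrow> vdegree E' v \<le> vdegree E v"
  unfolding vdegree_def by (rule card_mono) auto

definition rooted_drawing :: "'a set \<Rightarrow> ('a \<times> 'a) set \<Rightarrow> 'a \<Rightarrow> nat
    \<Rightarrow> ('a \<Rightarrow> real) \<Rightarrow> ('a \<Rightarrow> int) \<Rightarrow> ('a \<times> 'a \<Rightarrow> real) \<Rightarrow> bool"
  where "rooted_drawing V E r s x y lane \<longleftrightarrow>
    lane_drawing V E x y lane \<and> (\<forall>e\<in>E. y (snd e) - y (fst e) \<le> int s) \<and>
    (is_source E r \<longrightarrow> (\<forall>w\<in>V. w \<noteq> r \<longrightarrow> y r < y w)) \<and>
    (is_sink E r \<longrightarrow> (\<exists>a b. a + b = vdegree E r \<and> a \<le> b + 1 \<and> b \<le> a + 1 \<and> sink_frame V E r x y lane a b))"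

lemma spans_insert_Un:
  assumes "\<forall>e\<in>E1. y1 (snd e) - y1 (fst e) \<le> s" "\<forall>e\<in>E2. y2 (snd e) - y2 (fst e) \<le> s"
    and "E1 \<subseteq> V1 \<times> V1" "E2 \<subseteq> V2 \<times> V2" "\<forall>w\<in>V1. y w = y1 w" "\<forall>w\<in>V2. y w = y2 w"
    and "y (snd e0) - y (fst e0) \<le> s"
  shows "\<forall>e\<in>insert e0 (E1 \<union> E2). y (snd e) - y (fst e) \<le> s"
  using assms by fastforce

lemma rooted_drawing_attach_sink_child:
  assumes T1: "rooted_tree V1 E1 r" and T2: "rooted_tree V2 E2 c" and dj: "V1 \<inter> V2 = {}"
    and r_source: "is_source (insert (r, c) (E1 \<union> E2)) r"
    and c_sink: "is_sink (insert (r, c) (E1 \<union> E2)) c"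
    and deg_c: "vdegree (insert (r, c) (E1 \<union> E2)) c < 2 * s"
    and R1: "rooted_drawing V1 E1 r s x1 y1 l1" and R2: "rooted_drawing V2 E2 c s x2 y2 l2"
    and yc: "y2 c = y1 r + int s"
  shows "\<exists>x y lane. rooted_drawing (V1 \<union> V2) (insert (r, c) (E1 \<union> E2)) r s x y lane \<and> y r = y1 r"
proof -
  have B1: "finite V1" "finite E1" "r \<in> V1" "E1 \<subseteq> V1 \<times> V1" using rooted_tree_props[OF T1] by auto
  have B2: "finite V2" "finite E2" "c \<in> V2" "E2 \<subseteq> V2 \<times> V2" using rooted_tree_props[OF T2] by auto
  have "is_source E1 r" "is_sink E2 c" using r_source c_sink by (auto simp: is_source_def is_sink_def)
  then obtain a b where D1: "lane_drawing V1 E1 x1 y1 l1" "\<forall>w\<in>V1. w \<noteq> r \<longrightarrow> y1 r < y1 w"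
    and D2: "lane_drawing V2 E2 x2 y2 l2" "sink_frame V2 E2 c x2 y2 l2 a b"
    and balance: "a + b = vdegree E2 c" "a \<le> b + 1" "b \<le> a + 1"
    and spans: "\<forall>e\<in>E1. y1 (snd e) - y1 (fst e) \<le> int s" "\<forall>e\<in>E2. y2 (snd e) - y2 (fst e) \<le> int s"
    using R1 R2 unfolding rooted_drawing_def by blast
  have "vdegree (insert (r, c) (E2 \<union> E1)) c = Suc (vdegree E2 c)"
    using B1 B2 dj by (intro vdegree_insert_Un) auto
  then have "max a b < s" using deg_c balance by (simp add: Un_commute)
  then have "y1 r < y2 c - int (max a b)" using yc by simp
  then obtain x y lane where D: "lane_drawing (V1 \<union> V2) (insert (r, c) (E1 \<union> E2)) x y lane"
    and lowest: "\<forall>w\<in>V1 \<union> V2. w \<noteq> r \<longrightarrow> y r < y w"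
    and yV: "\<forall>w\<in>V1. y w = y1 w" "\<forall>w\<in>V2. y w = y2 w"
    using lane_drawing_attach_sink_child[OF D1 D2] B1 B2 dj by blast
  have "\<forall>e\<in>insert (r, c) (E1 \<union> E2). y (snd e) - y (fst e) \<le> int s"
    by (rule spans_insert_Un[OF spans B1(4) B2(4) yV]) (use yV B1 B2 yc in simp)
  moreover have "\<not> is_sink (insert (r, c) (E1 \<union> E2)) r" by (auto simp: is_sink_def)
  ultimately have "rooted_drawing (V1 \<union> V2) (insert (r, c) (E1 \<union> E2)) r s x y lane"
    using D lowest unfolding rooted_drawing_def by blast
  then show ?thesis using yV B1 by auto
qed

lemma rooted_drawing_attach_source_child:
  assumes T1: "rooted_tree V1 E1 r" and T2: "rooted_tree V2 E2 c" and dj: "V1 \<inter> V2 = {}"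
    and r_sink: "is_sink (insert (c, r) (E1 \<union> E2)) r"
    and c_source: "is_source (insert (c, r) (E1 \<union> E2)) c"
    and deg_r: "vdegree (insert (c, r) (E1 \<union> E2)) r < 2 * s"
    and R1: "rooted_drawing V1 E1 r s x0 y1 l0"
    and R2: "\<And>Y. \<exists>x y lane. rooted_drawing V2 E2 c s x y lane \<and> y c = Y"
  shows "\<exists>x y lane. rooted_drawing (V1 \<union> V2) (insert (c, r) (E1 \<union> E2)) r s x y lane \<and> y r = y1 r"
proof -
  have B1: "finite V1" "finite E1" "r \<in> V1" "E1 \<subseteq> V1 \<times> V1" using rooted_tree_props[OF T1] by auto
  have B2: "finite V2" "finite E2" "c \<in> V2" "E2 \<subseteq> V2 \<times> V2" using rooted_tree_props[OF T2] by auto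
  have "is_sink E1 r" "is_source E2 c" using r_sink c_source by (auto simp: is_source_def is_sink_def)
  then obtain a b where D0: "lane_drawing V1 E1 x0 y1 l0" and F0: "sink_frame V1 E1 r x0 y1 l0 a b"
    and balance0: "a + b = vdegree E1 r" "a \<le> b + 1" "b \<le> a + 1"
    and spans1: "\<forall>e\<in>E1. y1 (snd e) - y1 (fst e) \<le> int s"
    using R1 unfolding rooted_drawing_def by blast
  txt \<open>Mirroring if necessary, the new child goes to the side with fewer children.\<close>
  obtain x1 l1 a b where D1: "lane_drawing V1 E1 x1 y1 l1" and F1: "sink_frame V1 E1 r x1 y1 l1 a b"
    and balance: "a + b = vdegree E1 r" "a \<le> b" "b \<le> a + 1"
  proof (cases "a \<le> b")
    case True
    then show thesis using that[OF D0 F0] balance0 by blast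
  next
    case False
    then show thesis using that[OF lane_drawing_mirror[OF D0] sink_frame_mirror[OF F0]] balance0 by simp
  qed
  obtain x2 y2 l2 where "rooted_drawing V2 E2 c s x2 y2 l2" and yc: "y2 c = y1 r - int a - 1"
    using R2 by blast
  then have D2: "lane_drawing V2 E2 x2 y2 l2" "\<forall>w\<in>V2. w \<noteq> c \<longrightarrow> y2 c < y2 w"
    and spans2: "\<forall>e\<in>E2. y2 (snd e) - y2 (fst e) \<le> int s"
    using \<open>is_source E2 c\<close> unfolding rooted_drawing_def by blast+
  obtain x y lane where D: "lane_drawing (V1 \<union> V2) (insert (c, r) (E1 \<union> E2)) x y lane"
    and F: "sink_frame (V1 \<union> V2) (insert (c, r) (E1 \<union> E2)) r x y lane (Suc a) b"
    and yV: "\<forall>w\<in>V1. y w = y1 w" "\<forall>w\<in>V2. y w = y2 w"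
    using sink_frame_attach_source_child[OF D1 F1 D2 yc] B1 B2 dj by blast
  have "vdegree (insert (c, r) (E1 \<union> E2)) r = Suc (vdegree E1 r)"
    using B1 B2 dj by (intro vdegree_insert_Un) auto
  then have deg: "vdegree (insert (c, r) (E1 \<union> E2)) r = Suc (a + b)" using balance(1) by simp
  then have "int a + 1 \<le> int s" using deg_r balance by linarith
  then have "\<forall>e\<in>insert (c, r) (E1 \<union> E2). y (snd e) - y (fst e) \<le> int s"
    by (intro spans_insert_Un[OF spans1 spans2 B1(4) B2(4) yV]) (use yV B1 B2 yc in simp)
  moreover have "\<not> is_source (insert (c, r) (E1 \<union> E2)) r" by (auto simp: is_source_def)
  moreover have "Suc a + b = vdegree (insert (c, r) (E1 \<union> E2)) r" "Suc a \<le> b + 1" "b \<le> Suc a + 1"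
    using deg balance by simp_all
  ultimately have "rooted_drawing (V1 \<union> V2) (insert (c, r) (E1 \<union> E2)) r s x y lane"
    using D F unfolding rooted_drawing_def by blast
  then show ?thesis using yV B1 by auto
qed

lemma rooted_tree_drawing:
  assumes "rooted_tree V E r" "\<forall>w\<in>V. is_source E w \<or> is_sink E w" "\<forall>w\<in>V. vdegree E w < 2 * s"
  shows "\<exists>x y lane. rooted_drawing V E r s x y lane \<and> y r = Y"
  using assms
proof (induction arbitrary: Y rule: rooted_tree.induct)
  case (single r)
  have "lane_drawing {r} {} (\<lambda>_. 0) (\<lambda>_. Y) (\<lambda>_. 0)" by unfold_locales auto
  then have "rooted_drawing {r} {} r s (\<lambda>_. 0) (\<lambda>_. Y) (\<lambda>_. 0)"
    using sink_frame_single unfolding rooted_drawing_def vdegree_def by auto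
  then show ?case by blast
next
  case (attach V1 E1 r V2 E2 c e)
  define E where "E = insert e (E1 \<union> E2)"
  have B: "finite E" "r \<in> V1" "c \<in> V2"
    using rooted_tree_props[OF attach.hyps(1)] rooted_tree_props[OF attach.hyps(2)] by (auto simp: E_def)
  have sub: "is_source E' w \<or> is_sink E' w" "vdegree E' w < 2 * s" if "E' \<subseteq> E" "w \<in> V1 \<union> V2" for E' w
  proof -
    have "is_source E w \<or> is_sink E w" "vdegree E w < 2 * s" using attach.prems that(2) unfolding E_def by auto
    then show "is_source E' w \<or> is_sink E' w" "vdegree E' w < 2 * s"
      using that(1) vdegree_mono[OF B(1) that(1), of w] unfolding is_source_def is_sink_def by auto
  qed
  have "E1 \<subseteq> E" "E2 \<subseteq> E" by (auto simp: E_def)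
  then have IH1: "\<And>Y. \<exists>x y lane. rooted_drawing V1 E1 r s x y lane \<and> y r = Y"
    and IH2: "\<And>Y. \<exists>x y lane. rooted_drawing V2 E2 c s x y lane \<and> y c = Y"
    using attach.IH sub by blast+
  obtain x1 y1 l1 where R1: "rooted_drawing V1 E1 r s x1 y1 l1" "y1 r = Y" using IH1 by blast
  have bip: "is_source E r \<or> is_sink E r" "is_source E c \<or> is_sink E c"
    and deg: "vdegree E r < 2 * s" "vdegree E c < 2 * s"
    using attach.prems B unfolding E_def by auto
  from attach.hyps(4) consider "e = (r, c)" | "e = (c, r)" by blast
  then show ?case
  proof cases
    case 1
    then have "is_source E r" "is_sink E c" using bip by (auto simp: E_def is_source_def is_sink_def)
    moreover obtain x2 y2 l2 where "rooted_drawing V2 E2 c s x2 y2 l2" "y2 c = y1 r + int s"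
      using IH2 by blast
    ultimately show ?thesis
      using rooted_drawing_attach_sink_child[OF attach.hyps(1-3)] R1 deg 1 unfolding E_def by fastforce
  next
    case 2
    then have "is_sink E r" "is_source E c" using bip by (auto simp: E_def is_source_def is_sink_def)
    then show ?thesis
      using rooted_drawing_attach_source_child[OF attach.hyps(1-3) _ _ _ R1(1) IH2] R1 deg 2
      unfolding E_def by fastforce
  qed
qed

theorem mainTheorem8:
  fixes V :: "'a set" and E :: "('a \<times> 'a) set"
  assumes "directed_tree V E"
    and "\<forall>v\<in>V. is_source E v \<or> is_sink E v"
  shows "\<exists>pos curve. upward_planar_layered_drawing V E pos curve \<and>
           (\<forall>e\<in>E. edge_span pos e \<le> real (graph_degree V E div 2 + 1))"
proof -
  obtain r where r: "r \<in> V" using assms(1) unfolding directed_tree_def by auto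
  define s where "s = graph_degree V E div 2 + 1"
  have "finite V" using assms(1) unfolding directed_tree_def digraph_def by simp
  then have "\<forall>w\<in>V. vdegree E w \<le> graph_degree V E" unfolding graph_degree_def by simp
  moreover have "graph_degree V E < 2 * s" unfolding s_def by presburger
  ultimately have "\<forall>w\<in>V. vdegree E w < 2 * s" by fastforce
  then obtain x y lane where "rooted_drawing V E r s x y lane"
    using rooted_tree_drawing[OF directed_tree_rooted_tree[OF assms(1) r] assms(2)] by blast
  then have D: "lane_drawing V E x y lane" and spans: "\<forall>e\<in>E. y (snd e) - y (fst e) \<le> int s"
    unfolding rooted_drawing_def by blast+
  have "\<forall>e\<in>E. edge_span (vertex_point x y) e \<le> real s"
    using spans unfolding edge_span_def vertex_point_def by (metis of_int_diff of_int_le_iff of_int_of_nat_eq snd_conv)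
  then show ?thesis using lane_drawing.upward_planar_layered[OF D] unfolding s_def by blast
qed

end
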